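(* Let $n\ge 2$ and let $\Omega\subset\mathbb{R}^n$ be a smooth bounded strictly convex domain, and let $d$ be the radius of the largest ball inscribed in $\Omega$. Let $u$ be the solution of either \[ \mathrm{div}\Big(\frac{\nabla u}{\sqrt{1+|\nabla u|^2}}\Big)=\frac{1}{(1+|\nabla u|^2)^{3/2}}\ \text{in }\Omega,\qquad u=0\ \text{on }\partial\Omega, \] or \[ \mathrm{div}\Big(\frac{\nabla u}{\sqrt{1-|\nabla u|^2}}\Big)=\frac{1}{(1-|\nabla u|^2)^{3/2}},\quad |\nabla u|<1\ \text{in }\Omega,\qquad u=0\ \text{on }\partial\Omega. \] Then, with $u_{\min}=\min_{\overline\Omega}u$, \[ -u_{\min}\le\frac{d^2}{2}. \] *)

theory Defs
  imports "HOL-Analysis.Analysis"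
begin

definition pd :: "(real^'n \<Rightarrow> real) \<Rightarrow> 'n \<Rightarrow> real^'n \<Rightarrow> real" where
  "pd f i x = frechet_derivative f (at x) (axis i 1)"

definition grad :: "(real^'n \<Rightarrow> real) \<Rightarrow> real^'n \<Rightarrow> real^'n" where
  "grad f x = (\<chi> i. pd f i x)"

definition divg :: "(real^'n \<Rightarrow> real^'n) \<Rightarrow> real^'n \<Rightarrow> real" where
  "divg F x = (\<Sum>i\<in>UNIV. pd (\<lambda>y. F y $ i) i x)"

fun iter_pd :: "'n list \<Rightarrow> (real^'n \<Rightarrow> real) \<Rightarrow> real^'n \<Rightarrow> real" where
  "iter_pd [] f = f"
| "iter_pd (i # is) f = pd (iter_pd is f) i"

definition smooth_on :: "(real^'n) set \<Rightarrow> (real^'n \<Rightarrow> real) \<Rightarrow> bool" where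
  "smooth_on S f \<longleftrightarrow> (\<forall>is. \<forall>x\<in>S. iter_pd is f differentiable (at x))"

definition C2_on :: "(real^'n) set \<Rightarrow> (real^'n \<Rightarrow> real) \<Rightarrow> bool" where
  "C2_on S u \<longleftrightarrow> (\<forall>x\<in>S. u differentiable (at x)) \<and>
     (\<forall>i. \<forall>x\<in>S. pd u i differentiable (at x)) \<and>
     (\<forall>i j. continuous_on S (pd (pd u i) j))"

definition smooth_boundary :: "(real^'n) set \<Rightarrow> bool" where
  "smooth_boundary \<Omega> \<longleftrightarrow> (\<forall>p\<in>frontier \<Omega>. \<exists>U \<rho>. open U \<and> p \<in> U \<and> smooth_on U \<rho> \<and>
      (\<forall>x\<in>U. grad \<rho> x \<noteq> 0) \<and> \<Omega> \<inter> U = {x\<in>U. \<rho> x < 0})"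

definition strictly_convex_domain :: "(real^'n) set \<Rightarrow> bool" where
  "strictly_convex_domain \<Omega> \<longleftrightarrow> convex \<Omega> \<and>
     (\<forall>x\<in>closure \<Omega>. \<forall>y\<in>closure \<Omega>. x \<noteq> y \<longrightarrow> open_segment x y \<subseteq> \<Omega>)"

definition inradius :: "(real^'n) set \<Rightarrow> real" where
  "inradius \<Omega> = Sup {r. r > 0 \<and> (\<exists>x. ball x r \<subseteq> \<Omega>)}"

end

theory Submission
  imports Defs
begin

text \<open>
  Write \<open>\<delta>\<close> for the distance to the boundary, \<open>d\<close> for the inradius and \<open>\<epsilon> = \<plusminus>1\<close> for the
  two equations, which read \<open>(1 + \<epsilon>|\<nabla>u|\<^sup>2) \<Delta>u - \<epsilon> \<nabla>u\<cdot>D\<^sup>2u \<nabla>u = 1\<close> in nondivergence form.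
  For \<open>k > 1\<close> and \<open>D > d\<close> the barrier \<open>k (\<delta>\<^sup>2/2 - D \<delta>)\<close> lies below \<open>u\<close>: otherwise
  \<open>u\<close> minus the barrier has a negative interior minimum at some \<open>x\<^sub>1\<close>. By convexity, a supporting
  half-space at the boundary point nearest to \<open>x\<^sub>1\<close> gives an affine \<open>l \<ge> \<delta>\<close> with
  \<open>l(x\<^sub>1) = \<delta>(x\<^sub>1)\<close>, and as \<open>t \<mapsto> k (t\<^sup>2/2 - D t)\<close> decreases on \<open>[0, D]\<close>, the barrier built
  from \<open>l\<close> still touches \<open>u\<close> from below at \<open>x\<^sub>1\<close>. Hence \<open>\<nabla>u(x\<^sub>1)\<close> is parallel to
  \<open>\<nabla>l\<close> and \<open>D\<^sup>2u(x\<^sub>1) \<ge> k \<nabla>l \<otimes> \<nabla>l\<close>, which forces the left-hand side of the equation to be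
  at least \<open>k > 1\<close>. So \<open>-u \<le> k D\<^sup>2/2\<close>, and letting \<open>k \<rightarrow> 1\<close>, \<open>D \<rightarrow> d\<close> gives the claim.
\<close>

section \<open>Gradient, Hessian and divergence\<close>

definition hessian :: "(real^'n \<Rightarrow> real) \<Rightarrow> real^'n \<Rightarrow> real^'n^'n" where
  "hessian f x = (\<chi> i j. pd (pd f i) j x)"

lemma inner_matrix_vector_mult_sum:
  fixes A :: "real^'n^'n"
  shows "x \<bullet> (A *v y) = (\<Sum>i\<in>UNIV. \<Sum>j\<in>UNIV. x$i * A$i$j * y$j)"
  by (simp add: inner_vec_def matrix_vector_mult_def sum_distrib_left mult_ac)

lemma linear_eq_sum_axis:
  fixes L :: "real^'n \<Rightarrow> real"
  assumes "linear L"
  shows "L v = (\<Sum>i\<in>UNIV. v$i * L (axis i 1))"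
proof -
  have "L v = L (\<Sum>i\<in>UNIV. v$i *s axis i 1)" by (simp add: basis_expansion)
  also have "\<dots> = (\<Sum>i\<in>UNIV. v$i * L (axis i 1))"
    using assms by (simp add: linear_sum linear_scale scalar_mult_eq_scaleR)
  finally show ?thesis .
qed

lemma has_derivative_grad:
  fixes f :: "real^'n \<Rightarrow> real"
  assumes "f differentiable (at x)"
  shows "(f has_derivative (\<lambda>h. grad f x \<bullet> h)) (at x)"
proof -
  have D: "(f has_derivative frechet_derivative f (at x)) (at x)"
    using assms frechet_derivative_works by blast
  then have "linear (frechet_derivative f (at x))"
    using has_derivative_linear by blast
  then have "frechet_derivative f (at x) h = grad f x \<bullet> h" for h
    by (subst linear_eq_sum_axis) (simp_all add: grad_def pd_def inner_vec_def mult.commute)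
  then have "frechet_derivative f (at x) = (\<lambda>h. grad f x \<bullet> h)" ..
  with D show ?thesis by simp
qed

lemma has_real_derivative_along_line:
  fixes f :: "real^'n \<Rightarrow> real"
  assumes "f differentiable (at (x + t *\<^sub>R v))"
  shows "((\<lambda>s. f (x + s *\<^sub>R v)) has_real_derivative grad f (x + t *\<^sub>R v) \<bullet> v) (at t)"
proof -
  have "((\<lambda>s. x + s *\<^sub>R v) has_derivative (\<lambda>s. s *\<^sub>R v)) (at t)"
    by (auto intro!: derivative_eq_intros)
  from has_derivative_compose[OF this has_derivative_grad[OF assms]] show ?thesis
    by (simp add: has_field_derivative_def mult_commute_abs)
qed

lemma grad_along_line_has_real_derivative:
  fixes f :: "real^'n \<Rightarrow> real"
  assumes "\<forall>j. pd f j differentiable (at x)"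
  shows "((\<lambda>s. grad f (x + s *\<^sub>R v) \<bullet> v) has_real_derivative v \<bullet> (hessian f x *v v)) (at 0)"
proof -
  have "((\<lambda>s. pd f j (x + s *\<^sub>R v)) has_real_derivative grad (pd f j) x \<bullet> v) (at 0)" for j
    using has_real_derivative_along_line[of "pd f j" x 0 v] assms by simp
  then have "((\<lambda>s. \<Sum>j\<in>UNIV. v$j * pd f j (x + s *\<^sub>R v)) has_real_derivative
      (\<Sum>j\<in>UNIV. v$j * (grad (pd f j) x \<bullet> v))) (at 0)"
    by (auto intro!: DERIV_sum DERIV_cmult)
  moreover have "(\<Sum>j\<in>UNIV. v$j * (grad (pd f j) x \<bullet> v)) = v \<bullet> (hessian f x *v v)"
    by (simp only: inner_matrix_vector_mult_sum)
      (simp add: hessian_def grad_def inner_vec_def sum_distrib_left mult_ac)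
  ultimately show ?thesis
    by (simp add: grad_def inner_vec_def mult.commute)
qed

lemma norm_grad_sq: "(norm (grad f x))\<^sup>2 = (\<Sum>j\<in>UNIV. (pd f j x)\<^sup>2)"
proof -
  have "(norm (grad f x))\<^sup>2 = grad f x \<bullet> grad f x" by (simp add: dot_square_norm)
  then show ?thesis by (simp add: inner_vec_def grad_def power2_eq_square)
qed

lemma trace_hessian: "trace (hessian f x) = (\<Sum>i\<in>UNIV. pd (pd f i) i x)"
  by (simp add: trace_def hessian_def)

lemma divg_scaled_grad:
  fixes u :: "real^'n \<Rightarrow> real"
  assumes u2: "\<forall>j. pd u j differentiable (at x)"
    and \<psi>: "(\<psi> has_real_derivative \<psi>') (at ((norm (grad u x))\<^sup>2))"
  shows "divg (\<lambda>y. \<psi> ((norm (grad u y))\<^sup>2) *\<^sub>R grad u y) x =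
     2 * \<psi>' * (grad u x \<bullet> (hessian u x *v grad u x))
     + \<psi> ((norm (grad u x))\<^sup>2) * trace (hessian u x)"
proof -
  define S where "S y = (\<Sum>j\<in>UNIV. (pd u j y)\<^sup>2)" for y
  define D where "D j h = grad (pd u j) x \<bullet> h" for j h
  have Dj: "(pd u j has_derivative D j) (at x)" for j
    unfolding D_def using u2 by (intro has_derivative_grad) auto
  have DS: "(S has_derivative (\<lambda>h. \<Sum>j\<in>UNIV. 2 * pd u j x * D j h)) (at x)"
    unfolding S_def power2_eq_square
    by (rule derivative_eq_intros Dj refl | simp add: mult_ac)+
  have "(\<psi> has_real_derivative \<psi>') (at (S x))"
    using \<psi> by (simp add: S_def norm_grad_sq)
  from DERIV_compose_FDERIV[OF this DS]
  have F: "((\<lambda>y. \<psi> (S y) * pd u i y) has_derivative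
      (\<lambda>h. \<psi> (S x) * D i h + (\<Sum>j\<in>UNIV. 2 * pd u j x * D j h) * \<psi>' * pd u i x)) (at x)" for i
    using has_derivative_mult Dj by fastforce
  have pd_i: "pd (\<lambda>y. (\<psi> ((norm (grad u y))\<^sup>2) *\<^sub>R grad u y) $ i) i x =
      \<psi> (S x) * pd (pd u i) i x + (\<Sum>j\<in>UNIV. 2 * pd u j x * pd (pd u j) i x) * \<psi>' * pd u i x" for i
  proof -
    have "(\<lambda>y. (\<psi> ((norm (grad u y))\<^sup>2) *\<^sub>R grad u y) $ i) = (\<lambda>y. \<psi> (S y) * pd u i y)"
      by (simp only: norm_grad_sq S_def) (simp add: grad_def)
    moreover have "pd (\<lambda>y. \<psi> (S y) * pd u i y) i x =
        \<psi> (S x) * D i (axis i 1) + (\<Sum>j\<in>UNIV. 2 * pd u j x * D j (axis i 1)) * \<psi>' * pd u i x"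
      unfolding pd_def[of "\<lambda>y. \<psi> (S y) * pd u i y"] frechet_derivative_at[OF F[of i], symmetric] ..
    ultimately show ?thesis
      by (simp add: D_def grad_def inner_axis)
  qed
  have quad: "(\<Sum>i\<in>UNIV. (\<Sum>j\<in>UNIV. 2 * pd u j x * pd (pd u j) i x) * pd u i x)
      = 2 * (grad u x \<bullet> (hessian u x *v grad u x))"
    unfolding inner_matrix_vector_mult_sum
    by (subst sum.swap) (simp add: hessian_def grad_def sum_distrib_left sum_distrib_right mult_ac)
  have "S x = (norm (grad u x))\<^sup>2"
    by (simp add: S_def norm_grad_sq)
  with quad show ?thesis
    unfolding divg_def pd_i trace_hessian
    by (simp add: sum.distrib algebra_simps flip: sum_distrib_left sum_distrib_right)
qed

text \<open>\<open>\<epsilon> = 1\<close> is the first equation of the theorem (graphs in Euclidean space),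
  \<open>\<epsilon> = -1\<close> the second one (spacelike graphs in Minkowski space).\<close>

definition curvature_equation :: "real \<Rightarrow> (real^'n \<Rightarrow> real) \<Rightarrow> real^'n \<Rightarrow> bool" where
  "curvature_equation \<epsilon> u x \<longleftrightarrow> 0 < 1 + \<epsilon> * (norm (grad u x))\<^sup>2 \<and>
     divg (\<lambda>y. (1 / sqrt (1 + \<epsilon> * (norm (grad u y))\<^sup>2)) *\<^sub>R grad u y) x
       = 1 / (1 + \<epsilon> * (norm (grad u x))\<^sup>2) powr (3/2)"

lemma powr_three_halves:
  fixes t :: real
  assumes "0 < t"
  shows "t powr (3/2) = t * sqrt t"
proof -
  have "t powr (3/2) = t powr (1 + 1/2)" by simp
  also have "\<dots> = t powr 1 * t powr (1/2)" by (rule powr_add)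
  finally show ?thesis using assms by (simp add: powr_half_sqrt)
qed

lemma curvature_equation_algebraic:
  fixes u :: "real^'n \<Rightarrow> real"
  assumes u2: "\<forall>j. pd u j differentiable (at x)" and eq: "curvature_equation \<epsilon> u x"
  shows "(1 + \<epsilon> * (norm (grad u x))\<^sup>2) * trace (hessian u x)
           - \<epsilon> * (grad u x \<bullet> (hessian u x *v grad u x)) = 1"
proof -
  define \<rho> where "\<rho> = (norm (grad u x))\<^sup>2"
  define w where "w = 1 + \<epsilon> * \<rho>"
  define B where "B = grad u x \<bullet> (hessian u x *v grad u x)"
  define tr where "tr = trace (hessian u x)"
  have w: "0 < w" using eq by (simp add: curvature_equation_def w_def \<rho>_def)
  have "((\<lambda>t. 1 / sqrt (1 + \<epsilon> * t)) has_real_derivative - \<epsilon> / (2 * w * sqrt w)) (at \<rho>)"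
    using w unfolding w_def
    by (auto intro!: derivative_eq_intros simp: field_simps power2_eq_square)
  from divg_scaled_grad[OF u2 this[unfolded \<rho>_def]]
  have "1 / (w * sqrt w) = 2 * (- \<epsilon> / (2 * w * sqrt w)) * B + 1 / sqrt w * tr"
    using eq w by (simp add: curvature_equation_def w_def \<rho>_def B_def tr_def powr_three_halves)
  then have "w * tr - \<epsilon> * B = 1"
    using w by (simp add: field_simps)
  then show ?thesis
    by (simp add: w_def \<rho>_def B_def tr_def)
qed

section \<open>Positive semidefinite quadratic forms\<close>

lemma axis_inner_matrix_vector_mult_axis:
  fixes A :: "real^'n^'n"
  shows "axis i 1 \<bullet> (A *v axis j 1) = A$i$j"
  by (simp add: inner_axis' matrix_vector_mul_component inner_axis)

lemma psd_trace_nonneg: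
  fixes A :: "real^'n^'n"
  assumes "\<And>v. 0 \<le> v \<bullet> (A *v v)"
  shows "0 \<le> trace A"
  unfolding trace_def using assms
  by (intro sum_nonneg) (metis axis_inner_matrix_vector_mult_axis)

text \<open>Summing the form over the vectors \<open>p\<^sub>l e\<^sub>i - p\<^sub>i e\<^sub>l\<close> gives
  \<open>2 |p|\<^sup>2 trace A - 2 p\<cdot>A p\<close>.\<close>

lemma psd_quadratic_le_trace:
  fixes A :: "real^'n^'n"
  assumes psd: "\<And>v. 0 \<le> v \<bullet> (A *v v)"
  shows "p \<bullet> (A *v p) \<le> (norm p)\<^sup>2 * trace A"
proof -
  define Q where "Q v = v \<bullet> (A *v v)" for v
  have pair: "Q (c *\<^sub>R axis i 1 - d *\<^sub>R axis l 1)
      = c*c * A$i$i - c*d * A$i$l - d*c * A$l$i + d*d * A$l$l" for c d i l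
    by (simp add: Q_def algebra_simps axis_inner_matrix_vector_mult_axis)
  have "0 \<le> (\<Sum>i\<in>UNIV. \<Sum>l\<in>UNIV. Q (p$l *\<^sub>R axis i 1 - p$i *\<^sub>R axis l 1))"
    using psd by (simp add: Q_def sum_nonneg)
  also have "\<dots> = (\<Sum>i\<in>UNIV. \<Sum>l\<in>UNIV. p$l*p$l * A$i$i)
      - (\<Sum>i\<in>UNIV. \<Sum>l\<in>UNIV. p$l*p$i * A$i$l) - (\<Sum>i\<in>UNIV. \<Sum>l\<in>UNIV. p$i*p$l * A$l$i)
      + (\<Sum>i\<in>UNIV. \<Sum>l\<in>UNIV. p$i*p$i * A$l$l)"
    by (simp add: pair sum.distrib sum_subtractf)
  also have "(\<Sum>i\<in>UNIV. \<Sum>l\<in>UNIV. p$i*p$l * A$l$i) = Q p"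
    unfolding Q_def inner_matrix_vector_mult_sum by (subst sum.swap) (simp add: mult_ac)
  also have "(\<Sum>i\<in>UNIV. \<Sum>l\<in>UNIV. p$l*p$i * A$i$l) = Q p"
    unfolding Q_def inner_matrix_vector_mult_sum by (simp add: mult_ac)
  also have "(\<Sum>i\<in>UNIV. \<Sum>l\<in>UNIV. p$l*p$l * A$i$i) = (norm p)\<^sup>2 * trace A"
    by (subst sum.swap)
      (simp add: power2_norm_eq_inner inner_vec_def trace_def sum_distrib_left sum_distrib_right mult_ac)
  also have "(\<Sum>i\<in>UNIV. \<Sum>l\<in>UNIV. p$i*p$i * A$l$l) = (norm p)\<^sup>2 * trace A"
    by (simp add: power2_norm_eq_inner inner_vec_def trace_def sum_distrib_left sum_distrib_right mult_ac)
  finally show ?thesis by (simp add: Q_def mult.commute)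
qed

text \<open>Write \<open>H = N + k a a\<^sup>T\<close> with \<open>N\<close> positive semidefinite. As \<open>p\<close> is parallel to the
  unit vector \<open>a\<close>, the part \<open>k a a\<^sup>T\<close> contributes exactly \<open>k\<close>, and the contribution of \<open>N\<close> is
  nonnegative because \<open>p\<cdot>N p \<le> |p|\<^sup>2 trace N\<close>.\<close>

lemma curvature_operator_ge:
  fixes H :: "real^'n^'n"
  assumes H: "\<And>v. k * (a \<bullet> v)\<^sup>2 \<le> v \<bullet> (H *v v)"
    and a: "norm a = 1" and p: "p = \<sigma> *\<^sub>R a" and \<epsilon>: "0 \<le> 1 + \<epsilon> * (norm p)\<^sup>2"
  shows "k \<le> (1 + \<epsilon> * (norm p)\<^sup>2) * trace H - \<epsilon> * (p \<bullet> (H *v p))"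
proof -
  define N :: "real^'n^'n" where "N = (\<chi> i j. H$i$j - k * a$i * a$j)"
  have N: "v \<bullet> (N *v v) = v \<bullet> (H *v v) - k * (a \<bullet> v)\<^sup>2" for v
  proof -
    have "(a \<bullet> v)\<^sup>2 = (\<Sum>i\<in>UNIV. \<Sum>j\<in>UNIV. v$i * v$j * (a$i * a$j))"
      by (simp add: inner_vec_def power2_eq_square sum_product mult_ac)
    then show ?thesis
      by (simp add: N_def inner_matrix_vector_mult_sum algebra_simps sum_subtractf sum_distrib_left)
  qed
  have N_psd: "0 \<le> v \<bullet> (N *v v)" for v
    using H[of v] N[of v] by simp
  have aa: "a \<bullet> a = 1"
    using a by (simp add: dot_square_norm)
  then have "(\<Sum>i\<in>UNIV. a$i * a$i) = 1"
    by (simp add: inner_vec_def)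
  then have tr: "trace H = trace N + k"
    by (simp add: N_def trace_def sum_subtractf mult.assoc flip: sum_distrib_left)
  have ap: "(a \<bullet> p)\<^sup>2 = (norm p)\<^sup>2"
    using a aa by (simp add: p power2_eq_square)
  have "(1 + \<epsilon> * (norm p)\<^sup>2) * trace H - \<epsilon> * (p \<bullet> (H *v p))
      = k + ((1 + \<epsilon> * (norm p)\<^sup>2) * trace N - \<epsilon> * (p \<bullet> (N *v p)))"
    by (simp add: tr N ap algebra_simps)
  moreover have "0 \<le> (1 + \<epsilon> * (norm p)\<^sup>2) * trace N - \<epsilon> * (p \<bullet> (N *v p))"
  proof (cases "\<epsilon> \<le> 0")
    case True
    then have "\<epsilon> * (p \<bullet> (N *v p)) \<le> 0"
      using N_psd[of p] by (simp add: mult_nonpos_nonneg)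
    moreover have "0 \<le> (1 + \<epsilon> * (norm p)\<^sup>2) * trace N"
      using \<epsilon> psd_trace_nonneg[OF N_psd] by simp
    ultimately show ?thesis by simp
  next
    case False
    then have "\<epsilon> * (p \<bullet> (N *v p)) \<le> \<epsilon> * ((norm p)\<^sup>2 * trace N)"
      using psd_quadratic_le_trace[OF N_psd] by simp
    then show ?thesis
      using psd_trace_nonneg[OF N_psd] by (simp add: algebra_simps)
  qed
  ultimately show ?thesis by simp
qed

section \<open>Second-order conditions at a touching point\<close>

lemma local_min_second_derivative_nonneg:
  fixes f f' :: "real \<Rightarrow> real"
  assumes r: "0 < r" and min: "\<And>t. \<bar>t\<bar> < r \<Longrightarrow> f 0 \<le> f t"
    and f': "\<And>t. \<bar>t\<bar> < r \<Longrightarrow> (f has_real_derivative f' t) (at t)"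
    and f'': "(f' has_real_derivative c) (at 0)"
  shows "f' 0 = 0" and "0 \<le> c"
proof -
  show f'0: "f' 0 = 0"
    using DERIV_local_min[OF f'[of 0]] min r by auto
  show "0 \<le> c"
  proof (rule ccontr)
    assume "\<not> 0 \<le> c"
    moreover have "((\<lambda>y. f' y / y) \<longlongrightarrow> c) (at_right 0)"
      using f'' f'0 by (simp add: has_field_derivative_iff filterlim_at_split)
    ultimately have "eventually (\<lambda>y. f' y / y < 0) (at_right 0)"
      by (simp add: order_tendstoD(2))
    then obtain e where e: "0 < e" "\<And>y. 0 < y \<Longrightarrow> y < e \<Longrightarrow> f' y / y < 0"
      unfolding eventually_at_right_field by auto
    define t where "t = min e r / 2"
    have t: "0 < t" "t < e" "t < r" using e r by (auto simp: t_def)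
    obtain y where y: "0 < y" "y < t" "f t - f 0 = t * f' y"
      using MVT2[of 0 t f f'] t f' by auto
    have "f' y < 0"
      using e(2)[of y] y t by (simp add: divide_less_0_iff)
    then have "f t < f 0"
      using y t mult_pos_neg[of t "f' y"] by linarith
    with min[of t] t show False by simp
  qed
qed

lemma ball_contains_short_segment:
  fixes x w :: "'a::real_normed_vector"
  assumes "0 < e"
  obtains r where "0 < r" "\<And>t. \<bar>t\<bar> < r \<Longrightarrow> x + t *\<^sub>R w \<in> ball x e"
proof
  have w1: "0 < norm w + 1" by (simp add: add_nonneg_pos)
  then show "0 < e / (norm w + 1)" using assms by simp
  show "x + t *\<^sub>R w \<in> ball x e" if "\<bar>t\<bar> < e / (norm w + 1)" for t
  proof -
    have "\<bar>t\<bar> * norm w \<le> \<bar>t\<bar> * (norm w + 1)" by (simp add: mult_left_mono)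
    also have "\<dots> < e" using that w1 by (simp add: pos_less_divide_eq)
    finally show ?thesis by (simp add: dist_norm)
  qed
qed

lemma local_min_sub_ridge_along:
  fixes u :: "real^'n \<Rightarrow> real" and h :: "real \<Rightarrow> real"
  assumes e: "0 < e"
    and u1: "\<forall>y\<in>ball x e. u differentiable (at y)"
    and u2: "\<forall>j. pd u j differentiable (at x)"
    and h': "\<And>s. (h has_real_derivative h' s) (at s)"
    and h'': "(h' has_real_derivative c) (at (a \<bullet> x))"
    and min: "\<forall>y\<in>ball x e. u x - h (a \<bullet> x) \<le> u y - h (a \<bullet> y)"
  shows "grad u x \<bullet> w = h' (a \<bullet> x) * (a \<bullet> w)" and "c * (a \<bullet> w)\<^sup>2 \<le> w \<bullet> (hessian u x *v w)"
proof -
  obtain r where r: "0 < r" and line: "\<And>t. \<bar>t\<bar> < r \<Longrightarrow> x + t *\<^sub>R w \<in> ball x e"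
    using ball_contains_short_segment[OF e] by blast
  define f where "f t = u (x + t *\<^sub>R w) - h (a \<bullet> x + t * (a \<bullet> w))" for t
  define f' where "f' t = grad u (x + t *\<^sub>R w) \<bullet> w - h' (a \<bullet> x + t * (a \<bullet> w)) * (a \<bullet> w)" for t
  have "f 0 \<le> f t" if "\<bar>t\<bar> < r" for t
  proof -
    have "u x - h (a \<bullet> x) \<le> u (x + t *\<^sub>R w) - h (a \<bullet> (x + t *\<^sub>R w))"
      using bspec[OF min line[OF that]] .
    then show ?thesis by (simp add: f_def inner_add_right)
  qed
  moreover have "(f has_real_derivative f' t) (at t)" if "\<bar>t\<bar> < r" for t
    unfolding f_def[abs_def] f'_def
    using has_real_derivative_along_line[of u x t w] u1 line[OF that]
    by (auto intro!: derivative_eq_intros DERIV_chain2[OF h'])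
  moreover have "(f' has_real_derivative w \<bullet> (hessian u x *v w) - c * (a \<bullet> w) * (a \<bullet> w)) (at 0)"
    unfolding f'_def[abs_def]
    using grad_along_line_has_real_derivative[OF u2, of w] h''
    by (auto intro!: derivative_eq_intros DERIV_chain2[where f = h'])
  ultimately have "f' 0 = 0" and "0 \<le> w \<bullet> (hessian u x *v w) - c * (a \<bullet> w) * (a \<bullet> w)"
    using local_min_second_derivative_nonneg[OF r] by blast+
  then show "grad u x \<bullet> w = h' (a \<bullet> x) * (a \<bullet> w)" and "c * (a \<bullet> w)\<^sup>2 \<le> w \<bullet> (hessian u x *v w)"
    by (simp_all add: f'_def power2_eq_square)
qed

lemma local_min_sub_ridge:
  fixes u :: "real^'n \<Rightarrow> real" and h :: "real \<Rightarrow> real"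
  assumes "0 < e"
    and "\<forall>y\<in>ball x e. u differentiable (at y)"
    and "\<forall>j. pd u j differentiable (at x)"
    and "\<And>s. (h has_real_derivative h' s) (at s)"
    and "(h' has_real_derivative c) (at (a \<bullet> x))"
    and "\<forall>y\<in>ball x e. u x - h (a \<bullet> x) \<le> u y - h (a \<bullet> y)"
  shows "grad u x = h' (a \<bullet> x) *\<^sub>R a" and "c * (a \<bullet> v)\<^sup>2 \<le> v \<bullet> (hessian u x *v v)"
proof -
  have "grad u x \<bullet> w = (h' (a \<bullet> x) *\<^sub>R a) \<bullet> w" for w
    using local_min_sub_ridge_along(1)[OF assms] by simp
  then show "grad u x = h' (a \<bullet> x) *\<^sub>R a"
    using vector_eq_rdot by blast
  show "c * (a \<bullet> v)\<^sup>2 \<le> v \<bullet> (hessian u x *v v)"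
    by (rule local_min_sub_ridge_along(2)[OF assms])
qed

section \<open>Distance to the boundary of a convex domain\<close>

lemma open_convex_strict_separation:
  fixes \<Omega> :: "'a::euclidean_space set"
  assumes op: "open \<Omega>" and cv: "convex \<Omega>" and z: "z \<notin> \<Omega>"
  obtains a where "norm a = 1" "\<And>y. y \<in> \<Omega> \<Longrightarrow> 0 < a \<bullet> (z - y)"
proof -
  have "convex ((+) (-z) ` \<Omega>)" and "0 \<notin> (+) (-z) ` \<Omega>"
    using cv z by (auto intro: convex_translation)
  then obtain b where b: "b \<noteq> 0" "\<forall>x\<in>(+) (-z) ` \<Omega>. 0 \<le> b \<bullet> x"
    using separating_hyperplane_set_0 by blast
  define a where "a = - (1 / norm b) *\<^sub>R b"
  have a: "norm a = 1" and aa: "a \<bullet> a = 1"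
    using b by (simp_all add: a_def dot_square_norm)
  have le: "0 \<le> a \<bullet> (z - y)" if "y \<in> \<Omega>" for y
  proof -
    have "0 \<le> b \<bullet> (-z + y)" using b that by auto
    then show ?thesis using b by (simp add: a_def field_simps inner_diff_right)
  qed
  have "0 < a \<bullet> (z - y)" if y: "y \<in> \<Omega>" for y
  proof (rule ccontr)
    assume "\<not> 0 < a \<bullet> (z - y)"
    then have 0: "a \<bullet> (z - y) = 0" using le[OF y] by simp
    obtain e where e: "0 < e" "ball y e \<subseteq> \<Omega>" using op y open_contains_ball by blast
    then have "y + (e/2) *\<^sub>R a \<in> \<Omega>" using a by (auto simp: dist_norm)
    from le[OF this] have "0 \<le> a \<bullet> (z - y) - (e/2) * (a \<bullet> a)"
      by (simp add: algebra_simps)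
    with 0 e aa show False by simp
  qed
  with a that show ?thesis by blast
qed

lemma infdist_compl_le_halfspace:
  fixes \<Omega> :: "'a::real_inner set"
  assumes a: "norm a = 1" and sep: "\<And>y. y \<in> \<Omega> \<Longrightarrow> 0 < a \<bullet> (z - y)" and y: "y \<in> \<Omega>"
  shows "infdist y (-\<Omega>) \<le> a \<bullet> (z - y)"
proof -
  define q where "q = y + (a \<bullet> (z - y)) *\<^sub>R a"
  have "a \<bullet> (z - q) = 0"
    using a by (simp add: q_def inner_diff_right inner_add_right dot_square_norm)
  then have "q \<in> -\<Omega>" using sep by force
  then have "infdist y (-\<Omega>) \<le> dist y q" by (rule infdist_le)
  also have "\<dots> = a \<bullet> (z - y)" using sep[OF y] a by (simp add: q_def dist_norm)
  finally show ?thesis .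
qed

lemma infdist_compl_supporting_halfspace:
  fixes \<Omega> :: "'a::euclidean_space set"
  assumes op: "open \<Omega>" and cv: "convex \<Omega>" and bd: "bounded \<Omega>" and x: "x \<in> \<Omega>"
  obtains a z where "norm a = 1" "infdist x (-\<Omega>) = a \<bullet> (z - x)"
    "\<And>y. y \<in> \<Omega> \<Longrightarrow> infdist y (-\<Omega>) \<le> a \<bullet> (z - y)"
proof -
  have "-\<Omega> \<noteq> {}"
    using bd by (metis Compl_empty_eq double_complement not_bounded_UNIV)
  then obtain z where z: "z \<notin> \<Omega>" "infdist x (-\<Omega>) = dist x z"
    using infdist_attains_inf[of "-\<Omega>" x] op by (auto simp: closed_Compl)
  obtain a where a: "norm a = 1" and sep: "\<And>y. y \<in> \<Omega> \<Longrightarrow> 0 < a \<bullet> (z - y)"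
    using open_convex_strict_separation[OF op cv z(1)] by blast
  have "a \<bullet> (z - x) \<le> norm a * norm (z - x)" by (rule norm_cauchy_schwarz)
  then have "a \<bullet> (z - x) \<le> infdist x (-\<Omega>)" using z a by (simp add: dist_norm norm_minus_commute)
  then have "infdist x (-\<Omega>) = a \<bullet> (z - x)"
    using infdist_compl_le_halfspace[OF a sep x] by simp
  with a infdist_compl_le_halfspace[OF a sep] that show ?thesis by blast
qed

lemma infdist_compl_le_inradius:
  fixes \<Omega> :: "(real^'n) set"
  assumes op: "open \<Omega>" and bd: "bounded \<Omega>" and x: "x \<in> \<Omega>"
  shows "infdist x (-\<Omega>) \<le> inradius \<Omega>"
proof -
  have "infdist x (-\<Omega>) > 0"
    using infdist_pos_not_in_closed[of "-\<Omega>" x] op bd x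
    by (metis Compl_empty_eq ComplD closed_Compl double_complement not_bounded_UNIV)
  moreover have "ball x (infdist x (-\<Omega>)) \<subseteq> \<Omega>"
    using infdist_le[of _ "-\<Omega>" x] by (force simp: dist_commute)
  moreover have "bdd_above {r. r > 0 \<and> (\<exists>x. ball x r \<subseteq> \<Omega>)}"
  proof (rule bdd_aboveI)
    fix r assume "r \<in> {r. r > 0 \<and> (\<exists>x. ball x r \<subseteq> \<Omega>)}"
    then obtain c where r: "r > 0" "ball c r \<subseteq> \<Omega>" by auto
    then have "diameter (ball c r) \<le> diameter \<Omega>" using diameter_subset bd by blast
    then show "r \<le> diameter \<Omega>" using r by simp
  qed
  ultimately show ?thesis
    unfolding inradius_def by (intro cSup_upper) auto
qed

section \<open>Comparison with the barrier\<close>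

definition barrier :: "real \<Rightarrow> real \<Rightarrow> real \<Rightarrow> real" where
  "barrier k D t = k * (t\<^sup>2 / 2 - D * t)"

lemma barrier_antimono:
  assumes "0 \<le> k" "0 \<le> t" "t \<le> s" "s \<le> D"
  shows "barrier k D s \<le> barrier k D t"
proof -
  have "s\<^sup>2 / 2 - D * s - (t\<^sup>2 / 2 - D * t) = (s - t) * ((s + t) / 2 - D)"
    by (simp add: power2_eq_square algebra_simps field_simps)
  also have "\<dots> \<le> 0" using assms by (intro mult_nonneg_nonpos) auto
  finally show ?thesis using assms(1) by (simp add: barrier_def mult_left_mono)
qed

lemma barrier_lower_bound:
  assumes "0 \<le> k"
  shows "- (k * D\<^sup>2 / 2) \<le> barrier k D t"
proof -
  have "barrier k D t + k * D\<^sup>2 / 2 = k * (t - D)\<^sup>2 / 2"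
    by (simp add: barrier_def power2_eq_square algebra_simps)
  with assms show ?thesis by (smt (verit) zero_le_power2 divide_nonneg_nonneg mult_nonneg_nonneg)
qed

lemma barrier_has_real_derivative:
  "((\<lambda>s. barrier k D (c - s)) has_real_derivative k * (D - (c - s))) (at s)"
proof -
  have "((\<lambda>s. barrier k D (c - s)) has_real_derivative k * ((c - s) * (- 1) - D * (- 1))) (at s)"
    unfolding barrier_def by (auto intro!: derivative_eq_intros)
  then show ?thesis by (simp add: algebra_simps)
qed

lemma attains_interior_min:
  fixes \<phi> :: "'a::euclidean_space \<Rightarrow> real"
  assumes op: "open \<Omega>" and bd: "bounded \<Omega>" and cont: "continuous_on (closure \<Omega>) \<phi>"
    and frontier: "\<forall>y\<in>frontier \<Omega>. 0 \<le> \<phi> y" and x: "x \<in> \<Omega>" "\<phi> x < 0"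
  obtains x1 where "x1 \<in> \<Omega>" "\<And>y. y \<in> \<Omega> \<Longrightarrow> \<phi> x1 \<le> \<phi> y"
proof -
  have "\<exists>x1\<in>closure \<Omega>. \<forall>y\<in>closure \<Omega>. \<phi> x1 \<le> \<phi> y"
  proof (rule continuous_attains_inf[OF _ _ cont])
    show "compact (closure \<Omega>)" using bd by (simp add: compact_closure)
    show "closure \<Omega> \<noteq> {}" using x closure_subset by blast
  qed
  then obtain x1 where x1: "x1 \<in> closure \<Omega>" "\<forall>y\<in>closure \<Omega>. \<phi> x1 \<le> \<phi> y"
    by blast
  have "\<phi> x1 \<le> \<phi> x"
    using x1(2) x(1) closure_subset by blast
  then have neg: "\<phi> x1 < 0"
    using x(2) by linarith
  have "x1 \<in> \<Omega>"
  proof (rule ccontr)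
    assume "x1 \<notin> \<Omega>"
    then have "x1 \<in> frontier \<Omega>"
      using x1(1) op by (simp add: frontier_def interior_open)
    with frontier neg show False by auto
  qed
  with x1(2) closure_subset that show ?thesis by blast
qed

lemma min_sub_barrier_touching:
  fixes \<Omega> :: "(real^'n) set" and u :: "real^'n \<Rightarrow> real"
  assumes op: "open \<Omega>" and cv: "convex \<Omega>" and bd: "bounded \<Omega>" and C2: "C2_on \<Omega> u"
    and k: "0 < k" and D: "inradius \<Omega> < D" and x1: "x1 \<in> \<Omega>"
    and min: "\<And>y. y \<in> \<Omega> \<Longrightarrow>
      u x1 - barrier k D (infdist x1 (-\<Omega>)) \<le> u y - barrier k D (infdist y (-\<Omega>))"
  obtains a \<sigma> where "norm a = 1" "grad u x1 = \<sigma> *\<^sub>R a"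
    "\<And>v. k * (a \<bullet> v)\<^sup>2 \<le> v \<bullet> (hessian u x1 *v v)"
proof -
  obtain a z where a: "norm a = 1" and x1_dist: "infdist x1 (-\<Omega>) = a \<bullet> (z - x1)"
    and dist_le: "\<And>y. y \<in> \<Omega> \<Longrightarrow> infdist y (-\<Omega>) \<le> a \<bullet> (z - y)"
    using infdist_compl_supporting_halfspace[OF op cv bd x1] by blast
  obtain e0 where e0: "0 < e0" "ball x1 e0 \<subseteq> \<Omega>"
    using op x1 open_contains_ball by blast
  define e where "e = min e0 (D - infdist x1 (-\<Omega>))"
  have e: "0 < e" and ball: "ball x1 e \<subseteq> \<Omega>"
    using e0 infdist_compl_le_inradius[OF op bd x1] D by (auto simp: e_def)
  define h where "h s = barrier k D (a \<bullet> z - s)" for s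
  \<comment> \<open>Near \<open>x\<^sub>1\<close> the affine bound \<open>a\<cdot>(z - y)\<close> on the distance stays below \<open>D\<close>, where the
      barrier profile decreases, so the barrier built from it still touches \<open>u\<close> at \<open>x\<^sub>1\<close>.\<close>
  have min_ridge: "\<forall>y\<in>ball x1 e. u x1 - h (a \<bullet> x1) \<le> u y - h (a \<bullet> y)"
  proof
    fix y assume y: "y \<in> ball x1 e"
    have "a \<bullet> (x1 - y) \<le> norm a * norm (x1 - y)" by (rule norm_cauchy_schwarz)
    then have "a \<bullet> (z - y) \<le> D"
      using y a x1_dist by (simp add: e_def dist_norm inner_diff_right)
    then have "h (a \<bullet> y) \<le> barrier k D (infdist y (-\<Omega>))"
      using k y ball dist_le infdist_nonneg
      by (auto simp: h_def inner_diff_right intro!: barrier_antimono)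
    moreover have "h (a \<bullet> x1) = barrier k D (infdist x1 (-\<Omega>))"
      by (simp add: h_def x1_dist inner_diff_right)
    ultimately show "u x1 - h (a \<bullet> x1) \<le> u y - h (a \<bullet> y)"
      using min[of y] y ball by force
  qed
  have h': "(h has_real_derivative k * (D - (a \<bullet> z - s))) (at s)" for s
    unfolding h_def by (rule barrier_has_real_derivative)
  have h'': "((\<lambda>s. k * (D - (a \<bullet> z - s))) has_real_derivative k) (at (a \<bullet> x1))"
    by (auto intro!: derivative_eq_intros)
  have u1: "\<forall>y\<in>ball x1 e. u differentiable (at y)" and u2: "\<forall>j. pd u j differentiable (at x1)"
    using C2 ball x1 by (auto simp: C2_on_def)
  show ?thesis
    using local_min_sub_ridge[OF e u1 u2 h' h'' min_ridge] a that by blast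
qed

lemma barrier_le_solution:
  fixes \<Omega> :: "(real^'n) set" and u :: "real^'n \<Rightarrow> real"
  assumes op: "open \<Omega>" and cv: "convex \<Omega>" and bd: "bounded \<Omega>"
    and C2: "C2_on \<Omega> u" and cont: "continuous_on (closure \<Omega>) u"
    and boundary: "\<forall>x\<in>frontier \<Omega>. u x = 0"
    and eq: "\<forall>x\<in>\<Omega>. curvature_equation \<epsilon> u x"
    and k: "1 < k" and D: "inradius \<Omega> < D" and x: "x \<in> \<Omega>"
  shows "barrier k D (infdist x (-\<Omega>)) \<le> u x"
proof (rule ccontr)
  define \<phi> where "\<phi> y = u y - barrier k D (infdist y (-\<Omega>))" for y
  assume "\<not> ?thesis"
  then have neg: "\<phi> x < 0" by (simp add: \<phi>_def)
  have cont_\<phi>: "continuous_on (closure \<Omega>) \<phi>"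
    unfolding \<phi>_def barrier_def by (intro continuous_intros cont) auto
  have frontier_\<phi>: "\<forall>y\<in>frontier \<Omega>. 0 \<le> \<phi> y"
    using boundary op by (simp add: \<phi>_def barrier_def frontier_def interior_open)
  obtain x1 where x1: "x1 \<in> \<Omega>" and min: "\<And>y. y \<in> \<Omega> \<Longrightarrow> \<phi> x1 \<le> \<phi> y"
    using attains_interior_min[OF op bd cont_\<phi> frontier_\<phi> x neg] by blast
  have "u x1 - barrier k D (infdist x1 (-\<Omega>)) \<le> u y - barrier k D (infdist y (-\<Omega>))"
    if "y \<in> \<Omega>" for y
    using min[OF that] by (simp add: \<phi>_def)
  moreover have "0 < k" using k by simp
  ultimately obtain a \<sigma> where a: "norm a = 1" "grad u x1 = \<sigma> *\<^sub>R a"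
    and hess: "\<And>v. k * (a \<bullet> v)\<^sup>2 \<le> v \<bullet> (hessian u x1 *v v)"
    using min_sub_barrier_touching[OF op cv bd C2 _ D x1] by blast
  have u2: "\<forall>j. pd u j differentiable (at x1)"
    using C2 x1 by (simp add: C2_on_def)
  have "0 < 1 + \<epsilon> * (norm (grad u x1))\<^sup>2"
    using eq x1 by (simp add: curvature_equation_def)
  then have "k \<le> (1 + \<epsilon> * (norm (grad u x1))\<^sup>2) * trace (hessian u x1)
      - \<epsilon> * (grad u x1 \<bullet> (hessian u x1 *v grad u x1))"
    by (intro curvature_operator_ge[OF hess a]) simp
  also have "\<dots> = 1"
    using curvature_equation_algebraic[OF u2] eq x1 by blast
  finally show False using k by simp
qed

lemma curvature_equation_cases:
  fixes \<Omega> :: "(real^'n) set" and u :: "real^'n \<Rightarrow> real"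
  assumes "(\<forall>x\<in>\<Omega>. divg (\<lambda>y. (1 / sqrt (1 + (norm (grad u y))\<^sup>2)) *\<^sub>R grad u y) x
                   = 1 / (1 + (norm (grad u x))\<^sup>2) powr (3/2))
         \<or> (\<forall>x\<in>\<Omega>. norm (grad u x) < 1 \<and>
                   divg (\<lambda>y. (1 / sqrt (1 - (norm (grad u y))\<^sup>2)) *\<^sub>R grad u y) x
                   = 1 / (1 - (norm (grad u x))\<^sup>2) powr (3/2))" (is "?euclidean \<or> ?lorentzian")
  obtains \<epsilon> where "\<forall>x\<in>\<Omega>. curvature_equation \<epsilon> u x"
  using assms
proof
  assume ?euclidean
  then show ?thesis
    using that[of 1] by (simp add: curvature_equation_def add_pos_nonneg)
next
  assume ?lorentzian
  then show ?thesis
    using that[of "-1"] by (simp add: curvature_equation_def abs_square_less_1)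
qed

lemma le_half_sq_of_scaled_bounds:
  fixes c d :: real
  assumes "\<And>k D. 1 < k \<Longrightarrow> d < D \<Longrightarrow> c \<le> k * D\<^sup>2 / 2"
  shows "c \<le> d\<^sup>2 / 2"
proof -
  have "((\<lambda>\<epsilon>. (1 + \<epsilon>) * (d + \<epsilon>)\<^sup>2 / 2) \<longlongrightarrow> (1 + 0) * (d + 0)\<^sup>2 / 2) (at_right 0)"
    by (intro tendsto_intros) simp
  moreover have "\<forall>\<^sub>F \<epsilon> in at_right 0. c \<le> (1 + \<epsilon>) * (d + \<epsilon>)\<^sup>2 / 2"
    using assms by (auto simp: eventually_at_right_field intro: exI[of _ 1])
  ultimately show ?thesis
    using tendsto_lowerbound by fastforce
qed

lemma solution_ge_neg_half_inradius_sq: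
  fixes \<Omega> :: "(real^'n) set" and u :: "real^'n \<Rightarrow> real"
  assumes op: "open \<Omega>" and cv: "convex \<Omega>" and bd: "bounded \<Omega>"
    and C2: "C2_on \<Omega> u" and cont: "continuous_on (closure \<Omega>) u"
    and boundary: "\<forall>x\<in>frontier \<Omega>. u x = 0"
    and eq: "\<forall>x\<in>\<Omega>. curvature_equation \<epsilon> u x" and x: "x \<in> \<Omega>"
  shows "- u x \<le> (inradius \<Omega>)\<^sup>2 / 2"
proof (rule le_half_sq_of_scaled_bounds)
  fix k D :: real
  assume k: "1 < k" and D: "inradius \<Omega> < D"
  have "barrier k D (infdist x (-\<Omega>)) \<le> u x"
    using barrier_le_solution[OF op cv bd C2 cont boundary eq k D x] .
  moreover have "- (k * D\<^sup>2 / 2) \<le> barrier k D (infdist x (-\<Omega>))"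
    using k by (intro barrier_lower_bound) simp
  ultimately show "- u x \<le> k * D\<^sup>2 / 2" by linarith
qed

theorem theorem5p1:
  fixes \<Omega> :: "(real^'n) set" and u :: "real^'n \<Rightarrow> real"
  assumes "CARD('n) \<ge> 2"
    and "open \<Omega>" and "connected \<Omega>" and "\<Omega> \<noteq> {}" and "bounded \<Omega>"
    and "smooth_boundary \<Omega>" and "strictly_convex_domain \<Omega>"
    and "C2_on \<Omega> u" and "continuous_on (closure \<Omega>) u"
    and "\<forall>x\<in>frontier \<Omega>. u x = 0"
    and "(\<forall>x\<in>\<Omega>. divg (\<lambda>y. (1 / sqrt (1 + (norm (grad u y))\<^sup>2)) *\<^sub>R grad u y) x
                   = 1 / (1 + (norm (grad u x))\<^sup>2) powr (3/2))
         \<or> (\<forall>x\<in>\<Omega>. norm (grad u x) < 1 \<and>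
                   divg (\<lambda>y. (1 / sqrt (1 - (norm (grad u y))\<^sup>2)) *\<^sub>R grad u y) x
                   = 1 / (1 - (norm (grad u x))\<^sup>2) powr (3/2))"
  shows "- Inf (u ` closure \<Omega>) \<le> (inradius \<Omega>)\<^sup>2 / 2"
proof -
  have cv: "convex \<Omega>"
    using assms(7) by (simp add: strictly_convex_domain_def)
  obtain \<epsilon> where eq: "\<forall>x\<in>\<Omega>. curvature_equation \<epsilon> u x"
    using curvature_equation_cases[OF assms(11)] by blast
  have "- ((inradius \<Omega>)\<^sup>2 / 2) \<le> u x" if "x \<in> closure \<Omega>" for x
  proof (cases "x \<in> \<Omega>")
    case True
    with solution_ge_neg_half_inradius_sq[OF assms(2) cv assms(5,8,9,10) eq] show ?thesis
      by fastforce
  next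
    case False
    with that assms(2,10) show ?thesis
      by (simp add: frontier_def interior_open)
  qed
  then have "- ((inradius \<Omega>)\<^sup>2 / 2) \<le> Inf (u ` closure \<Omega>)"
    using assms(4) closure_subset by (intro cInf_greatest) auto
  then show ?thesis by simp
qed

end
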